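(* Let $S$ be a set of $n=5$ points all lying on a circle $\Gamma$ with center $O$, such that $\Gamma=$ SEC$(S)$, no two points of $S$ are antipodal on $\Gamma$, and no isometry of the plane other than the identity maps $S$ onto itself. Then there exist distinct $p,q\in S$ such that SED$(S\setminus\{p\})=$ SED$(S)$ and the antipodal point $q'$ of $q$ on $\Gamma$ lies in the open arc of $\Gamma$ that contains $p$ and whose endpoints are the two points of $S$ adjacent to $p$ in the cyclic order around $O$.
   Context: SED$(X)$ is the smallest closed disk containing a finite set $X$, and SEC$(X)$ is its boundary circle. Two points of $\Gamma$ are antipodal if the segment joining them passes through $O$. *)

theory Defs
  imports "HOL-Analysis.Analysis"
begin

definition is_enclosing_min_disk :: "complex set \<Rightarrow> complex \<Rightarrow> real \<Rightarrow> bool" where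
  "is_enclosing_min_disk X c r \<longleftrightarrow>
     X \<subseteq> cball c r \<and> (\<forall>c' r'. X \<subseteq> cball c' r' \<longrightarrow> r \<le> r')"

definition SED :: "complex set \<Rightarrow> complex set" where
  "SED X = (THE D. \<exists>c r. D = cball c r \<and> is_enclosing_min_disk X c r)"

definition antipode :: "complex \<Rightarrow> complex \<Rightarrow> complex" where
  "antipode c x = 2 * c - x"

definition plane_isometry :: "(complex \<Rightarrow> complex) \<Rightarrow> bool" where
  "plane_isometry f \<longleftrightarrow> (\<forall>x y. dist (f x) (f y) = dist x y)"

definition open_arc :: "complex \<Rightarrow> real \<Rightarrow> complex \<Rightarrow> complex \<Rightarrow> complex \<Rightarrow> complex set" where
  "open_arc c R a b p = connected_component_set (sphere c R - {a, b}) p"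

end

theory Submission
  imports Defs
begin

text \<open>Write the points of \<open>S\<close> as \<open>circle_point c R t\<close> with angles \<open>t0 < t1 < t2 < t3 < t4 < t0 + 2 pi\<close>.
  Since the smallest enclosing disk is centred at \<open>c\<close>, no open half-plane bounded by a line
  through \<open>c\<close> contains \<open>S\<close>; equivalently every closed semicircle meets \<open>S\<close>. Hence each of the
  five gaps between cyclically consecutive angles is at most \<open>pi\<close>, and it is not \<open>pi\<close> because
  \<open>S\<close> has no antipodal pair. Five gaps in \<open>(0, pi)\<close> summing to \<open>2 pi\<close> contain two disjoint pairs
  of adjacent gaps with sums below \<open>pi\<close>: this gives points \<open>a, p, b, x, y\<close> in cyclic order
  such that the arcs from \<open>a\<close> to \<open>b\<close> and from \<open>b\<close> to \<open>y\<close> are shorter than a semicircle.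
  Deleting \<open>p\<close> leaves four points whose gaps are all below \<open>pi\<close>, so the smallest enclosing
  disk does not change, and the antipode of \<open>y\<close> lies strictly between \<open>a\<close> and \<open>b\<close>.\<close>

section \<open>Smallest enclosing disks\<close>

lemma dist_midpoint_square:
  fixes s a b :: "'a::real_inner"
  shows "(dist s (midpoint a b))\<^sup>2 = ((dist s a)\<^sup>2 + (dist s b)\<^sup>2) / 2 - (dist a b)\<^sup>2 / 4"
  unfolding dist_norm midpoint_def power2_norm_eq_inner
  by (simp add: inner_add_left inner_add_right inner_diff_left inner_diff_right inner_commute field_simps)

lemma dist_shift_square:
  fixes s c d :: "'a::real_inner"
  shows "(dist s (c + t *\<^sub>R d))\<^sup>2 = (dist s c)\<^sup>2 - 2 * t * ((s - c) \<bullet> d) + t\<^sup>2 * (norm d)\<^sup>2"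
  unfolding dist_norm power2_norm_eq_inner
  by (simp add: inner_commute algebra_simps power2_eq_square)

lemma enclosing_min_disk_square_le:
  assumes min: "is_enclosing_min_disk X c r" and "X \<noteq> {}"
    and bound: "\<And>s. s \<in> X \<Longrightarrow> (dist s c')\<^sup>2 \<le> \<rho>"
  shows "r\<^sup>2 \<le> \<rho>"
proof -
  obtain s0 where "s0 \<in> X" using \<open>X \<noteq> {}\<close> by blast
  hence "r \<ge> 0"
    using min unfolding is_enclosing_min_disk_def by (meson mem_cball order_trans subsetD zero_le_dist)
  have "\<rho> \<ge> 0"
    using bound[OF \<open>s0 \<in> X\<close>] zero_le_power2[of "dist s0 c'"] by linarith
  have "X \<subseteq> cball c' (sqrt \<rho>)"
    using bound by (auto simp: dist_commute real_le_rsqrt)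
  hence "r \<le> sqrt \<rho>"
    using min unfolding is_enclosing_min_disk_def by blast
  hence "r\<^sup>2 \<le> (sqrt \<rho>)\<^sup>2"
    using \<open>r \<ge> 0\<close> by (rule power_mono)
  thus ?thesis
    using \<open>\<rho> \<ge> 0\<close> by simp
qed

lemma enclosing_min_disk_unique:
  assumes "X \<noteq> {}" and min1: "is_enclosing_min_disk X c1 r1" and min2: "is_enclosing_min_disk X c2 r2"
  shows "c1 = c2 \<and> r1 = r2"
proof -
  have r: "r1 = r2"
    using min1 min2 unfolding is_enclosing_min_disk_def by force
  have "(dist s (midpoint c1 c2))\<^sup>2 \<le> r1\<^sup>2 - (dist c1 c2)\<^sup>2 / 4" if "s \<in> X" for s
  proof -
    have "dist s c1 \<le> r1" "dist s c2 \<le> r1"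
      using min1 min2 r that unfolding is_enclosing_min_disk_def by (auto simp: dist_commute)
    hence "(dist s c1)\<^sup>2 \<le> r1\<^sup>2" "(dist s c2)\<^sup>2 \<le> r1\<^sup>2"
      by (simp_all add: power_mono)
    thus ?thesis unfolding dist_midpoint_square by simp
  qed
  hence "r1\<^sup>2 \<le> r1\<^sup>2 - (dist c1 c2)\<^sup>2 / 4"
    using enclosing_min_disk_square_le[OF min1 \<open>X \<noteq> {}\<close>] by blast
  with r show ?thesis by simp
qed

lemma enclosing_min_disk_exists:
  assumes "X \<noteq> {}" "bounded X"
  obtains c r where "is_enclosing_min_disk X c r"
proof -
  txt \<open>Minimise the radius over the compact set of enclosing disks with centre in
    \<open>cball c0 (2 * M)\<close> and radius at most \<open>M\<close>; every other enclosing disk has radius \<open>\<ge> M\<close>.\<close>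
  obtain c0 M where sub: "X \<subseteq> cball c0 M" and "M \<ge> 0"
    using \<open>bounded X\<close> bounded_subset_cball by blast
  obtain s0 where "s0 \<in> X" using \<open>X \<noteq> {}\<close> by blast
  define C where "C = (\<Inter>s\<in>X. {p :: complex \<times> real. dist s (fst p) \<le> snd p})"
  define K where "K = (cball c0 (2 * M) \<times> {0..M}) \<inter> C"
  have "closed C"
    unfolding C_def by (intro closed_INT ballI closed_Collect_le continuous_intros)
  hence "compact K"
    unfolding K_def by (intro compact_Int_closed compact_Times compact_cball compact_Icc)
  moreover have "(c0, M) \<in> K"
    using sub \<open>M \<ge> 0\<close> unfolding K_def C_def by (auto simp: dist_commute)
  ultimately obtain p where "p \<in> K" and p_min: "\<forall>q\<in>K. snd p \<le> snd q"
    using continuous_attains_inf[of K snd] continuous_on_snd[OF continuous_on_id] by blast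
  have "is_enclosing_min_disk X (fst p) (snd p)"
    unfolding is_enclosing_min_disk_def
  proof (intro conjI allI impI)
    show "X \<subseteq> cball (fst p) (snd p)"
      using \<open>p \<in> K\<close> unfolding K_def C_def by (auto simp: dist_commute)
    fix c' r' assume sub': "X \<subseteq> cball c' r'"
    show "snd p \<le> r'"
    proof (cases "M \<le> r'")
      case True
      with \<open>p \<in> K\<close> show ?thesis unfolding K_def by auto
    next
      case False
      have "dist c0 s0 \<le> M" "dist c' s0 \<le> r'"
        using sub sub' \<open>s0 \<in> X\<close> by auto
      hence "dist c0 c' \<le> 2 * M" "r' \<ge> 0"
        using False dist_triangle[of c0 c' s0] by (auto simp: dist_commute intro: order_trans[OF zero_le_dist])
      hence "(c', r') \<in> K"
        using sub' False unfolding K_def C_def by (auto simp: dist_commute)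
      thus ?thesis using p_min by force
    qed
  qed
  thus ?thesis using that by blast
qed

lemma SED_eq_cball_iff:
  assumes "X \<noteq> {}" "bounded X"
  shows "SED X = cball c r \<longleftrightarrow> is_enclosing_min_disk X c r"
proof -
  have SED_eqI: "SED X = cball c' r'" if min: "is_enclosing_min_disk X c' r'" for c' r'
    unfolding SED_def
  proof (rule the_equality)
    show "\<exists>c'' r''. cball c' r' = cball c'' r'' \<and> is_enclosing_min_disk X c'' r''"
      using min by blast
    fix D assume "\<exists>c'' r''. D = cball c'' r'' \<and> is_enclosing_min_disk X c'' r''"
    thus "D = cball c' r'"
      using enclosing_min_disk_unique[OF \<open>X \<noteq> {}\<close> min] by blast
  qed
  show ?thesis
  proof
    assume "SED X = cball c r"
    obtain c' r' where min: "is_enclosing_min_disk X c' r'"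
      using enclosing_min_disk_exists[OF assms] .
    hence "cball c r = cball c' r'"
      using SED_eqI \<open>SED X = cball c r\<close> by simp
    moreover have "cball c' r' \<noteq> {}"
      using min \<open>X \<noteq> {}\<close> unfolding is_enclosing_min_disk_def by blast
    ultimately show "is_enclosing_min_disk X c r"
      using min by (auto simp: cball_eq_cball_iff)
  qed (rule SED_eqI)
qed

text \<open>No open half-plane bounded by a line through \<open>c\<close> contains \<open>X\<close>; for finite \<open>X\<close>
  this says that \<open>c\<close> lies in the convex hull of \<open>X\<close>.\<close>

definition surrounds :: "complex set \<Rightarrow> complex \<Rightarrow> bool" where
  "surrounds X c \<longleftrightarrow> (\<forall>d. d \<noteq> 0 \<longrightarrow> (\<exists>s\<in>X. (s - c) \<bullet> d \<le> 0))"

lemma enclosing_min_disk_iff_surrounds: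
  assumes "finite X" "X \<noteq> {}" and sphere: "X \<subseteq> sphere c R"
  shows "is_enclosing_min_disk X c R \<longleftrightarrow> surrounds X c"
proof
  assume min: "is_enclosing_min_disk X c R"
  show "surrounds X c"
    unfolding surrounds_def
  proof (intro allI impI, rule ccontr)
    txt \<open>If \<open>X\<close> lies in an open half-plane through \<open>c\<close>, moving the centre slightly into it
      brings every point of \<open>X\<close> closer.\<close>
    fix d :: complex assume "d \<noteq> 0" and "\<not> (\<exists>s\<in>X. (s - c) \<bullet> d \<le> 0)"
    define m where "m = Min ((\<lambda>s. (s - c) \<bullet> d) ` X)"
    have "m > 0"
      unfolding m_def using \<open>finite X\<close> \<open>X \<noteq> {}\<close> \<open>\<not> (\<exists>s\<in>X. (s - c) \<bullet> d \<le> 0)\<close> by auto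
    define t where "t = m / (norm d)\<^sup>2"
    have "(dist s (c + t *\<^sub>R d))\<^sup>2 \<le> R\<^sup>2 - m * t" if "s \<in> X" for s
    proof -
      have "m \<le> (s - c) \<bullet> d"
        unfolding m_def using \<open>finite X\<close> that by simp
      moreover have "t > 0"
        using \<open>m > 0\<close> \<open>d \<noteq> 0\<close> by (simp add: t_def)
      moreover have "dist s c = R"
        using sphere that by (auto simp: dist_commute)
      ultimately show ?thesis
        unfolding dist_shift_square using \<open>d \<noteq> 0\<close> by (simp add: t_def power2_eq_square field_simps)
    qed
    hence "R\<^sup>2 \<le> R\<^sup>2 - m * t"
      using enclosing_min_disk_square_le[OF min \<open>X \<noteq> {}\<close>] by blast
    moreover have "m * t > 0"
      using \<open>m > 0\<close> \<open>d \<noteq> 0\<close> by (simp add: t_def)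
    ultimately show False by simp
  qed
next
  assume surr: "surrounds X c"
  show "is_enclosing_min_disk X c R"
    unfolding is_enclosing_min_disk_def
  proof (intro conjI allI impI)
    show "X \<subseteq> cball c R" using sphere by auto
    fix c' r' assume sub: "X \<subseteq> cball c' r'"
    obtain s where "s \<in> X" "(s - c) \<bullet> (c' - c) \<le> 0"
    proof (cases "c' = c")
      case True
      thus ?thesis using that \<open>X \<noteq> {}\<close> by auto
    next
      case False
      hence "c' - c \<noteq> 0" by simp
      thus ?thesis using that surr unfolding surrounds_def by blast
    qed
    have "(dist s c')\<^sup>2 = R\<^sup>2 - 2 * ((s - c) \<bullet> (c' - c)) + (norm (c' - c))\<^sup>2"
      using dist_shift_square[of s c 1 "c' - c"] sphere \<open>s \<in> X\<close> by (auto simp: dist_commute)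
    hence "R\<^sup>2 \<le> (dist s c')\<^sup>2"
      using \<open>(s - c) \<bullet> (c' - c) \<le> 0\<close> zero_le_power2[of "norm (c' - c)"] by linarith
    hence "R \<le> dist s c'"
      by (rule power2_le_imp_le) simp
    also have "\<dots> \<le> r'"
      using sub \<open>s \<in> X\<close> by (auto simp: dist_commute)
    finally show "R \<le> r'" .
  qed
qed

section \<open>Points on a circle\<close>

definition circle_point :: "complex \<Rightarrow> real \<Rightarrow> real \<Rightarrow> complex" where
  "circle_point c R t = c + rcis R t"

lemma circle_point_add_2pi_multiple [simp]:
  "circle_point c R (t + 2 * pi * of_int k) = circle_point c R t"
proof -
  have "cis (t + 2 * pi * of_int k) = cis t * cis (2 * pi * of_int k)"
    by (rule cis_mult[symmetric])
  also have "\<dots> = cis t"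
    by simp
  finally show ?thesis
    by (simp add: circle_point_def rcis_def)
qed

lemma circle_point_add_2pi [simp]: "circle_point c R (t + 2 * pi) = circle_point c R t"
  using circle_point_add_2pi_multiple[of c R t 1] by simp

lemma circle_point_in_sphere: "R \<ge> 0 \<Longrightarrow> circle_point c R t \<in> sphere c R"
  by (simp add: circle_point_def dist_norm)

lemma circle_point_eq_imp_eq:
  assumes "R > 0" "circle_point c R s = circle_point c R t" "\<bar>s - t\<bar> < 2 * pi"
  shows "s = t"
proof -
  have "sin s = sin t \<and> cos s = cos t"
    using assms(1,2) by (auto simp: circle_point_def complex_eq_iff)
  then obtain k :: int where k: "s = t + 2 * pi * k"
    using sin_cos_eq_iff by blast
  hence "\<bar>real_of_int k\<bar> < 1"
    using assms(3) by (simp add: abs_mult)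
  hence "k = 0" by linarith
  with k show ?thesis by simp
qed

lemma inj_on_circle_point: "R > 0 \<Longrightarrow> inj_on (circle_point c R) {a..<a + 2 * pi}"
  by (rule inj_onI, erule circle_point_eq_imp_eq) auto

lemma angle_representative:
  obtains k :: int where "a \<le> t + 2 * pi * k" "t + 2 * pi * k < a + 2 * pi"
proof
  define x where "x = (t - a) / (2 * pi)"
  have "t + 2 * pi * of_int (- \<lfloor>x\<rfloor>) = a + 2 * pi * frac x"
    by (simp add: x_def frac_def field_simps)
  thus "a \<le> t + 2 * pi * of_int (- \<lfloor>x\<rfloor>)" "t + 2 * pi * of_int (- \<lfloor>x\<rfloor>) < a + 2 * pi"
    using frac_ge_0[of x] frac_lt_1[of x] by simp_all
qed

lemma sphere_circle_point:
  assumes "z \<in> sphere c R"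
  obtains t where "a \<le> t" "t < a + 2 * pi" "z = circle_point c R t"
proof -
  have "z = circle_point c R (Arg (z - c))"
    using assms rcis_cmod_Arg[of "z - c"] by (simp add: circle_point_def dist_norm norm_minus_commute)
  moreover obtain k :: int where "a \<le> Arg (z - c) + 2 * pi * k" "Arg (z - c) + 2 * pi * k < a + 2 * pi"
    using angle_representative .
  ultimately show ?thesis
    using that circle_point_add_2pi_multiple by metis
qed

lemma antipode_circle_point: "antipode c (circle_point c R t) = circle_point c R (t - pi)"
  by (simp add: antipode_def circle_point_def rcis_def flip: minus_cis')

lemma inner_circle_point: "(circle_point c R t - c) \<bullet> cis m = R * cos (t - m)"
  by (simp add: circle_point_def inner_complex_def cos_diff algebra_simps)

lemma surrounds_iff_semicircles:
  assumes sphere: "X \<subseteq> sphere c R" and "R > 0"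
  shows "surrounds X c \<longleftrightarrow> (\<forall>\<psi>. \<exists>t. \<psi> \<le> t \<and> t \<le> \<psi> + pi \<and> circle_point c R t \<in> X)"
proof
  assume surr: "surrounds X c"
  show "\<forall>\<psi>. \<exists>t. \<psi> \<le> t \<and> t \<le> \<psi> + pi \<and> circle_point c R t \<in> X"
  proof
    fix \<psi>
    obtain s where "s \<in> X" and s_inner: "(s - c) \<bullet> cis (\<psi> - pi / 2) \<le> 0"
      using surr unfolding surrounds_def by (meson cis_neq_zero)
    then obtain t where t: "\<psi> \<le> t" "t < \<psi> + 2 * pi" "s = circle_point c R t"
      using sphere sphere_circle_point by blast
    have "cos (t - (\<psi> - pi / 2)) = - sin (t - \<psi>)"
      by (simp add: minus_sin_cos_eq algebra_simps)
    hence "sin (t - \<psi>) \<ge> 0"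
      using s_inner \<open>R > 0\<close> by (simp add: t(3) inner_circle_point zero_le_mult_iff)
    hence "t \<le> \<psi> + pi"
      using sin_lt_zero[of "t - \<psi>"] t(2) by linarith
    thus "\<exists>t. \<psi> \<le> t \<and> t \<le> \<psi> + pi \<and> circle_point c R t \<in> X"
      using t \<open>s \<in> X\<close> by blast
  qed
next
  assume semicircles: "\<forall>\<psi>. \<exists>t. \<psi> \<le> t \<and> t \<le> \<psi> + pi \<and> circle_point c R t \<in> X"
  show "surrounds X c"
    unfolding surrounds_def
  proof (intro allI impI)
    fix d :: complex assume "d \<noteq> 0"
    define m where "m = Arg d"
    obtain t where t: "m + pi / 2 \<le> t" "t \<le> m + pi / 2 + pi" "circle_point c R t \<in> X"
      using semicircles by blast
    have "d = cmod d *\<^sub>R cis m"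
      using rcis_cmod_Arg[of d] by (simp add: m_def rcis_def scaleR_conv_of_real)
    hence "(circle_point c R t - c) \<bullet> d = cmod d * (R * cos (t - m))"
      by (metis inner_circle_point inner_scaleR_right)
    moreover have "cos (t - m) = - sin (t - m - pi / 2)"
      by (simp add: minus_sin_cos_eq)
    moreover have "sin (t - m - pi / 2) \<ge> 0"
      using t by (intro sin_ge_zero) auto
    ultimately have "(circle_point c R t - c) \<bullet> d \<le> 0"
      using \<open>R > 0\<close> by (simp add: mult_le_0_iff)
    thus "\<exists>s\<in>X. (s - c) \<bullet> d \<le> 0"
      using t(3) by blast
  qed
qed

lemma surrounds_four_points:
  assumes "R > 0" and order: "a < b" "b < x" "x < y" "y < a + 2 * pi"
    and gaps: "b - a < pi" "x - b < pi" "y - x < pi" "a + 2 * pi - y < pi"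
  shows "surrounds (circle_point c R ` {a, b, x, y}) c"
proof -
  have "\<exists>t. \<psi> \<le> t \<and> t \<le> \<psi> + pi \<and> circle_point c R t \<in> circle_point c R ` {a, b, x, y}" for \<psi>
  proof -
    obtain k :: int where k: "a \<le> \<psi> + 2 * pi * k" "\<psi> + 2 * pi * k < a + 2 * pi"
      using angle_representative .
    have "\<exists>u\<in>{b, x, y, a + 2 * pi}. \<psi> + 2 * pi * k \<le> u \<and> u \<le> \<psi> + 2 * pi * k + pi"
      using k order gaps by auto
    then obtain u where "u \<in> {b, x, y, a + 2 * pi}" "\<psi> + 2 * pi * k \<le> u" "u \<le> \<psi> + 2 * pi * k + pi"
      by blast
    hence u: "u \<in> {b, x, y, a + 2 * pi}" "\<psi> \<le> u - 2 * pi * k" "u - 2 * pi * k \<le> \<psi> + pi"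
      by linarith+
    have "circle_point c R (u - 2 * pi * k) = circle_point c R u"
      using circle_point_add_2pi_multiple[of c R "u - 2 * pi * k" k] by simp
    with u show ?thesis by auto
  qed
  moreover have "circle_point c R ` {a, b, x, y} \<subseteq> sphere c R"
    using \<open>R > 0\<close> circle_point_in_sphere by auto
  ultimately show ?thesis
    using surrounds_iff_semicircles \<open>R > 0\<close> by blast
qed

lemma surrounds_imp_gap_le_pi:
  assumes "R > 0" "X \<subseteq> sphere c R" "surrounds X c"
    and covered: "\<forall>s\<in>X. \<exists>t. v \<le> t \<and> t \<le> u + 2 * pi \<and> s = circle_point c R t"
  shows "v - u \<le> pi"
proof (rule ccontr)
  assume "\<not> v - u \<le> pi"
  obtain t where t: "(u + v - pi) / 2 \<le> t" "t \<le> (u + v - pi) / 2 + pi" "circle_point c R t \<in> X"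
    using surrounds_iff_semicircles assms(1-3) by blast
  then obtain t' where t': "v \<le> t'" "t' \<le> u + 2 * pi" "circle_point c R t = circle_point c R t'"
    using covered by blast
  have "u < t" "t < v"
    using t(1,2) \<open>\<not> v - u \<le> pi\<close> by (simp_all add: field_simps)
  hence "\<bar>t - t'\<bar> < 2 * pi"
    using t' by (simp add: abs_less_iff)
  hence "t = t'"
    using circle_point_eq_imp_eq[OF \<open>R > 0\<close> t'(3)] by simp
  with \<open>t < v\<close> \<open>v \<le> t'\<close> show False by simp
qed

lemma open_arc_circle_point:
  assumes "R > 0" and order: "a < p" "p < b" "b < a + 2 * pi"
  shows "open_arc c R (circle_point c R a) (circle_point c R b) (circle_point c R p)
           = circle_point c R ` {a<..<b}"
proof -
  define A where "A = circle_point c R ` {a<..<b}"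
  define B where "B = circle_point c R ` {b<..<a + 2 * pi}"
  define arc where "arc = open_arc c R (circle_point c R a) (circle_point c R b) (circle_point c R p)"
  have inj: "inj_on (circle_point c R) {a..<a + 2 * pi}"
    using inj_on_circle_point \<open>R > 0\<close> .
  have split: "sphere c R - {circle_point c R a, circle_point c R b} = A \<union> B"
  proof
    show "sphere c R - {circle_point c R a, circle_point c R b} \<subseteq> A \<union> B"
    proof
      fix z assume z: "z \<in> sphere c R - {circle_point c R a, circle_point c R b}"
      then obtain t where "a \<le> t" "t < a + 2 * pi" "z = circle_point c R t"
        using sphere_circle_point by blast
      moreover have "t \<noteq> a" "t \<noteq> b"
        using z calculation by auto
      ultimately show "z \<in> A \<union> B"
        unfolding A_def B_def by (metis UnI1 UnI2 greaterThanLessThan_iff image_eqI linorder_neqE_linordered_idom order_le_less)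
    qed
    show "A \<union> B \<subseteq> sphere c R - {circle_point c R a, circle_point c R b}"
      unfolding A_def B_def using order \<open>R > 0\<close> inj_on_eq_iff[OF inj]
      by (auto intro: circle_point_in_sphere)
  qed
  have "connected A"
    unfolding A_def circle_point_def by (intro connected_continuous_image connected_Ioo continuous_intros)
  moreover have "circle_point c R p \<in> A"
    using order unfolding A_def by auto
  ultimately have "A \<subseteq> arc"
    unfolding arc_def open_arc_def using split by (intro connected_component_maximal) auto
  moreover have "arc \<subseteq> A"
  proof -
    txt \<open>The chord through the two endpoints separates the two arcs.\<close>
    define f where "f z = (z - c) \<bullet> cis ((a + b) / 2)" for z
    define h where "h = (b - a) / 2"
    define U where "U = {z. R * cos h < f z}"
    define V where "V = {z. f z < R * cos h}"
    have "A \<subseteq> U"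
    proof
      fix z assume "z \<in> A"
      then obtain t where t: "a < t" "t < b" "z = circle_point c R t"
        unfolding A_def by auto
      have "cos h < cos \<bar>t - (a + b) / 2\<bar>"
        using t order by (intro cos_monotone_0_pi) (auto simp: h_def abs_less_iff field_simps)
      thus "z \<in> U"
        using \<open>R > 0\<close> by (simp add: U_def f_def t(3) inner_circle_point)
    qed
    have "B \<subseteq> V"
    proof
      fix z assume "z \<in> B"
      then obtain t where t: "b < t" "t < a + 2 * pi" "z = circle_point c R t"
        unfolding B_def by auto
      have "cos (t - (a + b) / 2) < cos h"
      proof (cases "t - (a + b) / 2 \<le> pi")
        case True
        thus ?thesis
          using t order by (intro cos_monotone_0_pi) (auto simp: h_def field_simps)
      next
        case False
        have "cos (2 * pi - (t - (a + b) / 2)) < cos h"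
          using t order False by (intro cos_monotone_0_pi) (auto simp: h_def field_simps)
        thus ?thesis by simp
      qed
      thus "z \<in> V"
        using \<open>R > 0\<close> by (simp add: V_def f_def t(3) inner_circle_point)
    qed
    have "arc \<subseteq> A \<union> B"
      unfolding arc_def open_arc_def using split connected_component_subset by blast
    have "connected arc"
      unfolding arc_def open_arc_def by simp
    moreover have "open U"
      unfolding U_def f_def by (intro open_Collect_less continuous_intros)
    moreover have "open V"
      unfolding V_def f_def by (intro open_Collect_less continuous_intros)
    moreover have "U \<inter> V \<inter> arc = {}"
      unfolding U_def V_def by auto
    moreover have "arc \<subseteq> U \<union> V"
      using \<open>arc \<subseteq> A \<union> B\<close> \<open>A \<subseteq> U\<close> \<open>B \<subseteq> V\<close> by blast
    ultimately have "U \<inter> arc = {} \<or> V \<inter> arc = {}"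
      by (rule connectedD)
    moreover have "circle_point c R p \<in> U \<inter> arc"
      using \<open>A \<subseteq> arc\<close> \<open>circle_point c R p \<in> A\<close> \<open>A \<subseteq> U\<close> by blast
    ultimately have "V \<inter> arc = {}"
      by blast
    thus "arc \<subseteq> A"
      using \<open>arc \<subseteq> A \<union> B\<close> \<open>B \<subseteq> V\<close> by blast
  qed
  ultimately show ?thesis
    unfolding arc_def A_def by blast
qed

section \<open>Five points on a circle\<close>

definition cyclic_angles ::
    "complex \<Rightarrow> real \<Rightarrow> complex set \<Rightarrow> real \<Rightarrow> real \<Rightarrow> real \<Rightarrow> real \<Rightarrow> real \<Rightarrow> bool" where
  "cyclic_angles c R S t0 t1 t2 t3 t4 \<longleftrightarrow>
     t0 < t1 \<and> t1 < t2 \<and> t2 < t3 \<and> t3 < t4 \<and> t4 < t0 + 2 * pi \<and>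
     S = circle_point c R ` {t0, t1, t2, t3, t4}"

lemma cyclic_angles_exist:
  assumes "S \<subseteq> sphere c R" "card S = 5"
  obtains t0 t1 t2 t3 t4 where "cyclic_angles c R S t0 t1 t2 t3 t4"
proof -
  have "\<forall>s\<in>S. \<exists>t. 0 \<le> t \<and> t < 2 * pi \<and> circle_point c R t = s"
  proof
    fix s assume "s \<in> S"
    then obtain t where "0 \<le> t" "t < 0 + 2 * pi" "s = circle_point c R t"
      using sphere_circle_point assms(1) by blast
    thus "\<exists>t. 0 \<le> t \<and> t < 2 * pi \<and> circle_point c R t = s" by auto
  qed
  from bchoice[OF this] obtain \<theta>
    where \<theta>: "\<forall>s\<in>S. 0 \<le> \<theta> s \<and> \<theta> s < 2 * pi \<and> circle_point c R (\<theta> s) = s"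
    by blast
  define T where "T = \<theta> ` S"
  have "S = circle_point c R ` T"
    unfolding T_def image_image using \<theta> by simp
  have "inj_on \<theta> S"
    using \<theta> by (intro inj_on_inverseI[of _ "circle_point c R"]) simp
  hence "card T = 5"
    unfolding T_def using assms(2) by (simp add: card_image)
  hence "finite T"
    by (simp add: card_ge_0_finite)
  define l where "l = sorted_list_of_set T"
  have "length l = 5"
    unfolding l_def using \<open>card T = 5\<close> by simp
  then obtain t0 t1 t2 t3 t4 where l: "l = [t0, t1, t2, t3, t4]"
    by (auto simp: numeral_eq_Suc length_Suc_conv)
  have "sorted_wrt (<) l"
    unfolding l_def by (rule strict_sorted_list_of_set)
  hence "t0 < t1 \<and> t1 < t2 \<and> t2 < t3 \<and> t3 < t4"
    by (simp add: l)
  moreover have T: "T = {t0, t1, t2, t3, t4}"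
    using \<open>finite T\<close> l unfolding l_def by (metis list.set set_sorted_list_of_set)
  moreover have "\<forall>t\<in>T. 0 \<le> t \<and> t < 2 * pi"
    unfolding T_def using \<theta> by blast
  ultimately have "cyclic_angles c R S t0 t1 t2 t3 t4"
    unfolding cyclic_angles_def using \<open>S = circle_point c R ` T\<close> by simp
  thus ?thesis by (rule that)
qed

lemma cyclic_angles_rotate:
  "cyclic_angles c R S t0 t1 t2 t3 t4 \<Longrightarrow> cyclic_angles c R S t1 t2 t3 t4 (t0 + 2 * pi)"
  unfolding cyclic_angles_def by auto

lemma cyclic_angles_first_gap_lt_pi:
  assumes "R > 0" and angles: "cyclic_angles c R S t0 t1 t2 t3 t4"
    and "surrounds S c" and no_antipodes: "\<forall>s\<in>S. antipode c s \<notin> S"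
  shows "t1 - t0 < pi"
proof -
  have S: "S = circle_point c R ` {t1, t2, t3, t4, t0 + 2 * pi}"
    using angles unfolding cyclic_angles_def by auto
  have "t1 - t0 \<le> pi"
  proof (rule surrounds_imp_gap_le_pi[OF \<open>R > 0\<close> _ \<open>surrounds S c\<close>])
    show "S \<subseteq> sphere c R"
      using S \<open>R > 0\<close> circle_point_in_sphere by auto
    have "\<forall>t\<in>{t1, t2, t3, t4, t0 + 2 * pi}. t1 \<le> t \<and> t \<le> t0 + 2 * pi"
      using angles unfolding cyclic_angles_def by auto
    thus "\<forall>s\<in>S. \<exists>t. t1 \<le> t \<and> t \<le> t0 + 2 * pi \<and> s = circle_point c R t"
      unfolding S by blast
  qed
  moreover have "t1 - t0 \<noteq> pi"
  proof
    assume "t1 - t0 = pi"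
    hence "t1 - pi = t0" by simp
    hence "antipode c (circle_point c R t1) = circle_point c R t0"
      by (simp add: antipode_circle_point)
    thus False
      using no_antipodes angles unfolding cyclic_angles_def by auto
  qed
  ultimately show ?thesis by simp
qed

lemma cyclic_angles_gaps_lt_pi:
  assumes "R > 0" and angles: "cyclic_angles c R S t0 t1 t2 t3 t4"
    and "surrounds S c" and "\<forall>s\<in>S. antipode c s \<notin> S"
  shows "t1 - t0 < pi" "t2 - t1 < pi" "t3 - t2 < pi" "t4 - t3 < pi" "t0 + 2 * pi - t4 < pi"
proof -
  note gap = cyclic_angles_first_gap_lt_pi[OF \<open>R > 0\<close> _ assms(3,4)]
  note rot1 = cyclic_angles_rotate[OF angles]
  note rot2 = cyclic_angles_rotate[OF rot1]
  note rot3 = cyclic_angles_rotate[OF rot2]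
  note rot4 = cyclic_angles_rotate[OF rot3]
  show "t1 - t0 < pi" "t2 - t1 < pi" "t3 - t2 < pi" "t4 - t3 < pi" "t0 + 2 * pi - t4 < pi"
    using gap[OF angles] gap[OF rot1] gap[OF rot2] gap[OF rot3] gap[OF rot4] by simp_all
qed

lemma cyclic_angles_two_short_arcs:
  assumes angles: "cyclic_angles c R S t0 t1 t2 t3 t4"
    and gaps: "t1 - t0 < pi" "t2 - t1 < pi" "t3 - t2 < pi" "t4 - t3 < pi" "t0 + 2 * pi - t4 < pi"
  obtains a p b x y where "cyclic_angles c R S a p b x y" "b - a < pi" "y - b < pi" "a + 2 * pi - y < pi"
proof -
  note rot1 = cyclic_angles_rotate[OF angles]
  note rot2 = cyclic_angles_rotate[OF rot1]
  note rot3 = cyclic_angles_rotate[OF rot2]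
  note rot4 = cyclic_angles_rotate[OF rot3]
  have "(t2 - t0 < pi \<and> t4 - t2 < pi) \<or> (t3 - t1 < pi \<and> t0 + 2 * pi - t3 < pi) \<or>
        (t4 - t2 < pi \<and> t1 + 2 * pi - t4 < pi) \<or> (t0 + 2 * pi - t3 < pi \<and> t2 - t0 < pi) \<or>
        (t1 + 2 * pi - t4 < pi \<and> t3 - t1 < pi)"
    using angles gaps unfolding cyclic_angles_def by linarith
  thus ?thesis
    using that[OF angles] that[OF rot1] that[OF rot2] that[OF rot3] that[OF rot4] gaps by auto
qed

lemma cyclic_angles_SED_remove:
  assumes "R > 0" and angles: "cyclic_angles c R S a p b x y"
    and short: "b - a < pi" "y - b < pi" "a + 2 * pi - y < pi"
  shows "SED (S - {circle_point c R p}) = cball c R"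
proof -
  have "S - {circle_point c R p} = circle_point c R ` ({a, p, b, x, y} - {p})"
    using angles inj_on_circle_point[OF \<open>R > 0\<close>, of c a]
    unfolding cyclic_angles_def by (subst inj_on_image_set_diff) auto
  also have "{a, p, b, x, y} - {p} = {a, b, x, y}"
    using angles unfolding cyclic_angles_def by auto
  finally have S': "S - {circle_point c R p} = circle_point c R ` {a, b, x, y}" .
  have "surrounds (circle_point c R ` {a, b, x, y}) c"
    using \<open>R > 0\<close> angles short unfolding cyclic_angles_def by (intro surrounds_four_points) auto
  moreover have "circle_point c R ` {a, b, x, y} \<subseteq> sphere c R"
    using \<open>R > 0\<close> circle_point_in_sphere by auto
  ultimately have "is_enclosing_min_disk (circle_point c R ` {a, b, x, y}) c R"
    by (subst enclosing_min_disk_iff_surrounds) auto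
  thus ?thesis
    unfolding S' by (subst SED_eq_cball_iff) auto
qed

lemma cyclic_angles_removable_point:
  assumes "R > 0" and angles: "cyclic_angles c R S a p b x y"
    and short: "b - a < pi" "y - b < pi" "a + 2 * pi - y < pi"
    and SED: "SED S = cball c R"
  shows "\<exists>p\<in>S. \<exists>q\<in>S. p \<noteq> q \<and> SED (S - {p}) = SED S \<and>
           (\<exists>a\<in>S - {p}. \<exists>b\<in>S - {p}. a \<noteq> b \<and>
              open_arc c R a b p \<inter> S = {p} \<and>
              antipode c q \<in> open_arc c R a b p)"
proof -
  have order: "a < p" "p < b" "b < x" "x < y" "y < a + 2 * pi"
    using angles unfolding cyclic_angles_def by auto
  have S: "S = circle_point c R ` {a, p, b, x, y}"
    using angles unfolding cyclic_angles_def by simp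
  have inj: "inj_on (circle_point c R) {a..<a + 2 * pi}"
    using inj_on_circle_point[OF \<open>R > 0\<close>] .
  have angles_in: "{a, p, b, x, y} \<subseteq> {a..<a + 2 * pi}" "{a<..<b} \<subseteq> {a..<a + 2 * pi}"
    using order by auto
  define arc where "arc = open_arc c R (circle_point c R a) (circle_point c R b) (circle_point c R p)"
  have arc: "arc = circle_point c R ` {a<..<b}"
    unfolding arc_def using \<open>R > 0\<close> order by (intro open_arc_circle_point) auto
  have "arc \<inter> S = circle_point c R ` ({a<..<b} \<inter> {a, p, b, x, y})"
    unfolding arc S using inj angles_in by (subst inj_on_image_Int) auto
  also have "{a<..<b} \<inter> {a, p, b, x, y} = {p}"
    using order by auto
  finally have "arc \<inter> S = {circle_point c R p}"
    by simp
  moreover have "antipode c (circle_point c R y) \<in> arc"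
    unfolding arc antipode_circle_point using order short by auto
  moreover have "SED (S - {circle_point c R p}) = SED S"
    using cyclic_angles_SED_remove[OF \<open>R > 0\<close> angles short] SED by simp
  moreover have "circle_point c R p \<noteq> circle_point c R y" "circle_point c R a \<noteq> circle_point c R b"
    "circle_point c R a \<noteq> circle_point c R p" "circle_point c R b \<noteq> circle_point c R p"
    using inj_on_eq_iff[OF inj] angles_in order by auto
  ultimately show ?thesis
    unfolding arc_def S by blast
qed

theorem lemma5p36:
  fixes S :: "complex set" and c :: complex and R :: real
  assumes "R > 0"
    and "S \<subseteq> sphere c R"
    and "card S = 5"
    and "SED S = cball c R"
    and "\<forall>x\<in>S. antipode c x \<notin> S"
    and "\<forall>f. plane_isometry f \<and> f ` S = S \<longrightarrow> f = id"
  shows "\<exists>p\<in>S. \<exists>q\<in>S. p \<noteq> q \<and> SED (S - {p}) = SED S \<and>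
           (\<exists>a\<in>S - {p}. \<exists>b\<in>S - {p}. a \<noteq> b \<and>
              open_arc c R a b p \<inter> S = {p} \<and>
              antipode c q \<in> open_arc c R a b p)"
proof -
  have "finite S" "S \<noteq> {}"
    using \<open>card S = 5\<close> card.infinite by fastforce+
  have "surrounds S c"
    using assms(2,4) \<open>finite S\<close> \<open>S \<noteq> {}\<close>
    by (simp add: SED_eq_cball_iff enclosing_min_disk_iff_surrounds finite_imp_bounded)
  obtain t0 t1 t2 t3 t4 where angles: "cyclic_angles c R S t0 t1 t2 t3 t4"
    using cyclic_angles_exist assms(2,3) by blast
  obtain a p b x y where "cyclic_angles c R S a p b x y" "b - a < pi" "y - b < pi" "a + 2 * pi - y < pi"
    using cyclic_angles_two_short_arcs[OF angles
        cyclic_angles_gaps_lt_pi[OF \<open>R > 0\<close> angles \<open>surrounds S c\<close> assms(5)]] .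
  thus ?thesis
    using cyclic_angles_removable_point \<open>R > 0\<close> assms(4) by blast
qed

end
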